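(* Let $p_{\mathcal I}$ denote the depth of the cluster tree $\mathcal T_{\mathcal I}$. Then $$W_{\rm mm}(t_0,s_0,r_0)\le C_{\rm mm}k^2(p_{\mathcal I}+1)(\#\hat t_0+\#\hat s_0+\#\hat r_0)\quad\text{for all }(t_0,s_0,r_0)\in\mathcal T_{\mathcal I\times\mathcal I\times\mathcal I},$$ with $C_{\rm mm}:=C_{\rm sp}^2C_{\rm mb}$.
   Context: $\mathcal T_{\mathcal I}$ is a binary cluster tree for a finite index set $\mathcal I$ (every cluster $t$ has a label $\hat t\subseteq\mathcal I$, the root has label $\mathcal I$, every non-leaf cluster has exactly two sons whose labels disjointly partition $\hat t$). $\mathcal T_{\mathcal I\times\mathcal I}$ is a block tree: its nodes are pairs $(t,s)$ of clusters, its root is the pair of roots, and a non-leaf block $(t,s)$ has sons $\mathrm{sons}^+(t)\times\mathrm{sons}^+(s)$, where $\mathrm{sons}^+(t)=\mathrm{sons}(t)$ if $t$ is not a leaf and $\mathrm{sons}^+(t)=\{t\}$ otherwise. $C_{\rm sp}$ is the sparsity constant: for each cluster $t$, at most $C_{\rm sp}$ clusters $s$ satisfy $(t,s)\in\mathcal T_{\mathcal I\times\mathcal I}$, and at most $C_{\rm sp}$ clusters $s$ satisfy $(s,t)\in\mathcal T_{\mathcal I\times\mathcal I}$. Matrices are $\mathcal H^2$-matrices of local rank $k$ on this block tree. $W_{\rm mm}(t,s,r)$, for $(t,s),(s,r)\in\mathcal T_{\mathcal I\times\mathcal I}$, is the number of operations of the recursive algorithm performing $Z|_{\hat t\times\hat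 r}\gets Z|_{\hat t\times\hat r}+X|_{\hat t\times\hat s}Y|_{\hat s\times\hat r}$: if neither $(t,s)$ nor $(s,r)$ is a leaf, it recurses over all $(t',s',r')\in\mathrm{sons}^+(t)\times\mathrm{sons}^+(s)\times\mathrm{sons}^+(r)$ (if $(t,r)$ is a leaf, the results go into temporary submatrices that are then added to $Z|_{\hat t\times\hat r}$ by local low-rank updates); otherwise the product is a low-rank matrix computed in factorized form and added by a local low-rank update. The triple tree $\mathcal T_{\mathcal I\times\mathcal I\times\mathcal I}$ has root (root,root,root); a triple $(t,s,r)$ with $(t,s)$ and $(s,r)$ both non-leaves has sons $\mathrm{sons}^+(t)\times\mathrm{sons}^+(s)\times\mathrm{sons}^+(r)$, and otherwise no sons. $C_{\rm mb}$ is a constant such that $W_{\rm mm}(t,s,r)\le C_{\rm mb}k^2(\#\hat t+\#\hat s+\#\hat r)$ if $(t,s)$ or $(s,r)$ is a leaf, and $W_{\rm mm}(t,s,r)\le C_{\rm mb}k^2(\#\hat t+\#\hat s+\#\hat r)+\sum_{t'\in\mathrm{sons}^+(t),s'\in\mathrm{sons}^+(s),r'\in\mathrm{sons}^+(r)}W_{\rm mm}(t',s',r')$ otherwise. *)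

theory Defs
  imports Complex_Main
begin

inductive_set clusters :: "'c \<Rightarrow> ('c \<Rightarrow> 'c set) \<Rightarrow> 'c set"
  for rt :: 'c and sons :: "'c \<Rightarrow> 'c set" where
  rootI: "rt \<in> clusters rt sons"
| son: "t \<in> clusters rt sons \<Longrightarrow> t' \<in> sons t \<Longrightarrow> t' \<in> clusters rt sons"

definition is_binary_cluster_tree ::
  "'i set \<Rightarrow> 'c \<Rightarrow> ('c \<Rightarrow> 'c set) \<Rightarrow> ('c \<Rightarrow> 'i set) \<Rightarrow> bool" where
  "is_binary_cluster_tree I rt sons label \<longleftrightarrow>
     finite I \<and> label rt = I \<and>
     finite (clusters rt sons) \<and>
     (\<forall>t\<in>clusters rt sons. rt \<notin> sons t) \<and>
     (\<forall>t1\<in>clusters rt sons. \<forall>t2\<in>clusters rt sons. t1 \<noteq> t2 \<longrightarrow> sons t1 \<inter> sons t2 = {}) \<and>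
     (\<forall>t\<in>clusters rt sons. sons t = {} \<or>
        (\<exists>a b. a \<noteq> b \<and> sons t = {a, b} \<and> label a \<inter> label b = {} \<and> label a \<union> label b = label t))"

inductive cluster_level :: "'c \<Rightarrow> ('c \<Rightarrow> 'c set) \<Rightarrow> 'c \<Rightarrow> nat \<Rightarrow> bool"
  for rt :: 'c and sons :: "'c \<Rightarrow> 'c set" where
  rootI: "cluster_level rt sons rt 0"
| son: "cluster_level rt sons t n \<Longrightarrow> t' \<in> sons t \<Longrightarrow> cluster_level rt sons t' (Suc n)"

definition cluster_depth :: "'c \<Rightarrow> ('c \<Rightarrow> 'c set) \<Rightarrow> nat" where
  "cluster_depth rt sons = Max {n. \<exists>t. cluster_level rt sons t n}"

definition sonsp :: "('c \<Rightarrow> 'c set) \<Rightarrow> 'c \<Rightarrow> 'c set" where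
  "sonsp sons t = (if sons t = {} then {t} else sons t)"

inductive_set blocks :: "'c \<Rightarrow> ('c \<Rightarrow> 'c set) \<Rightarrow> ('c \<times> 'c \<Rightarrow> bool) \<Rightarrow> ('c \<times> 'c) set"
  for rt :: 'c and sons :: "'c \<Rightarrow> 'c set" and bleaf :: "'c \<times> 'c \<Rightarrow> bool" where
  rootI: "(rt, rt) \<in> blocks rt sons bleaf"
| son: "(t, s) \<in> blocks rt sons bleaf \<Longrightarrow> \<not> bleaf (t, s) \<Longrightarrow>
        t' \<in> sonsp sons t \<Longrightarrow> s' \<in> sonsp sons s \<Longrightarrow> (t', s') \<in> blocks rt sons bleaf"

definition is_block_tree :: "'c \<Rightarrow> ('c \<Rightarrow> 'c set) \<Rightarrow> ('c \<times> 'c \<Rightarrow> bool) \<Rightarrow> bool" where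
  "is_block_tree rt sons bleaf \<longleftrightarrow>
     (\<forall>(t, s)\<in>blocks rt sons bleaf. sons t = {} \<and> sons s = {} \<longrightarrow> bleaf (t, s))"

inductive_set triples :: "'c \<Rightarrow> ('c \<Rightarrow> 'c set) \<Rightarrow> ('c \<times> 'c \<Rightarrow> bool) \<Rightarrow> ('c \<times> 'c \<times> 'c) set"
  for rt :: 'c and sons :: "'c \<Rightarrow> 'c set" and bleaf :: "'c \<times> 'c \<Rightarrow> bool" where
  rootI: "(rt, rt, rt) \<in> triples rt sons bleaf"
| son: "(t, s, r) \<in> triples rt sons bleaf \<Longrightarrow> \<not> bleaf (t, s) \<Longrightarrow> \<not> bleaf (s, r) \<Longrightarrow>
        t' \<in> sonsp sons t \<Longrightarrow> s' \<in> sonsp sons s \<Longrightarrow> r' \<in> sonsp sons r \<Longrightarrow>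
        (t', s', r') \<in> triples rt sons bleaf"

end

theory Submission
  imports Defs
begin

text \<open>Unrolling the recursion bounds W(t0,s0,r0) by the local costs
  C_mb k^2 (#t + #s + #r) summed over the descendants (t,s,r) of (t0,s0,r0) in the triple tree,
  generation by generation. Distinct triples of one generation have disjoint sons, so no
  descendant is counted twice, and there are at most p_I + 1 non-empty generations. Within one
  generation the first components lie in the corresponding sons^+-generation of t0, whose label
  sizes add up to at most #t0, and by sparsity every cluster is the first component of at most
  C_sp^2 triples (C_sp choices of s with (t,s) a block, then C_sp choices of r). The second and
  third components are handled alike, so each generation costs at most
  C_sp^2 C_mb k^2 (#t0 + #s0 + #r0).\<close>

primrec generation :: "('a \<Rightarrow> 'a set) \<Rightarrow> 'a \<Rightarrow> nat \<Rightarrow> 'a set" where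
  "generation f x 0 = {x}"
| "generation f x (Suc j) = \<Union>(f ` generation f x j)"

lemma generation_trans:
  "y \<in> generation f x i \<Longrightarrow> z \<in> generation f y j \<Longrightarrow> z \<in> generation f x (i + j)"
  by (induction j arbitrary: z) auto

lemma sum_UN_le:
  fixes g :: "'b \<Rightarrow> 'c::ordered_comm_monoid_add"
  assumes "finite A" "\<And>a. a \<in> A \<Longrightarrow> finite (B a)" "\<And>y. 0 \<le> g y"
  shows "sum g (\<Union>(B ` A)) \<le> (\<Sum>a\<in>A. sum g (B a))"
proof -
  have "\<Union>(B ` A) = snd ` Sigma A B" by (auto simp: image_iff)
  then have "sum g (\<Union>(B ` A)) = sum g (snd ` Sigma A B)" by simp
  also have "\<dots> \<le> sum (g \<circ> snd) (Sigma A B)"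
    using assms by (intro sum_image_le) auto
  also have "\<dots> = (\<Sum>a\<in>A. sum g (B a))"
    using assms by (simp add: sum.Sigma split_def)
  finally show ?thesis .
qed

lemma sum_comp_le_by_card_fibers:
  fixes g :: "'b \<Rightarrow> nat"
  assumes "finite S" "finite D" "h ` S \<subseteq> D" "\<And>y. card {x \<in> S. h x = y} \<le> K"
  shows "(\<Sum>x\<in>S. g (h x)) \<le> K * (\<Sum>y\<in>D. g y)"
proof -
  have "(\<Sum>x\<in>S. g (h x)) = (\<Sum>y\<in>h ` S. \<Sum>x\<in>{x \<in> S. h x = y}. g (h x))"
    using sum.image_gen[OF assms(1)] by blast
  also have "\<dots> = (\<Sum>y\<in>h ` S. g y * card {x \<in> S. h x = y})"
    by (intro sum.cong refl) simp
  also have "\<dots> \<le> (\<Sum>y\<in>h ` S. g y * K)"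
    by (intro sum_mono mult_le_mono2 assms(4))
  also have "\<dots> \<le> (\<Sum>y\<in>D. g y * K)"
    using assms(2,3) by (intro sum_mono2) auto
  finally show ?thesis by (simp add: sum_distrib_left mult.commute)
qed

lemma le_sum_generations:
  fixes W c :: "'a \<Rightarrow> real"
  assumes finite_generation: "\<And>j. finite (generation f x0 j)"
    and finite_sons: "\<And>j x. x \<in> generation f x0 j \<Longrightarrow> finite (f x)"
    and disjoint_sons: "\<And>j x y. x \<in> generation f x0 j \<Longrightarrow> y \<in> generation f x0 j \<Longrightarrow> x \<noteq> y \<Longrightarrow>
      f x \<inter> f y = {}"
    and W_le: "\<And>j x. x \<in> generation f x0 j \<Longrightarrow> W x \<le> c x + (\<Sum>y\<in>f x. W y)"
    and extinct: "generation f x0 (Suc D) = {}"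
  shows "W x0 \<le> (\<Sum>j\<le>D. \<Sum>x\<in>generation f x0 j. c x)"
proof -
  have step: "(\<Sum>x\<in>generation f x0 j. W x)
      \<le> (\<Sum>x\<in>generation f x0 j. c x) + (\<Sum>x\<in>generation f x0 (Suc j). W x)" for j
  proof -
    have "(\<Sum>x\<in>generation f x0 (Suc j). W x) = (\<Sum>x\<in>generation f x0 j. \<Sum>y\<in>f x. W y)"
      using finite_generation finite_sons disjoint_sons by (simp add: sum.UNION_disjoint)
    moreover have "(\<Sum>x\<in>generation f x0 j. W x) \<le> (\<Sum>x\<in>generation f x0 j. c x + (\<Sum>y\<in>f x. W y))"
      using W_le by (intro sum_mono)
    ultimately show ?thesis by (simp add: sum.distrib)
  qed
  have "W x0 \<le> (\<Sum>j\<le>m. \<Sum>x\<in>generation f x0 j. c x) + (\<Sum>x\<in>generation f x0 (Suc m). W x)" for m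
  proof (induction m)
    case 0
    then show ?case using step[of 0] by simp
  next
    case (Suc m)
    then show ?case using step[of "Suc m"] by simp
  qed
  from this[of D] show ?thesis using extinct by simp
qed

definition composable_triples :: "('a \<times> 'a) set \<Rightarrow> ('a \<times> 'a \<times> 'a) set" where
  "composable_triples R = {(t, s, r). (t, s) \<in> R \<and> (s, r) \<in> R}"

lemma finite_composable_triples: "finite R \<Longrightarrow> finite (composable_triples R)"
  by (rule finite_subset[of _ "Domain R \<times> Domain R \<times> Range R"])
    (auto simp: composable_triples_def finite_Domain finite_Range)

lemma card_Sigma_le_mult:
  assumes "finite A" "card A \<le> K" "\<And>a. a \<in> A \<Longrightarrow> finite (B a) \<and> card (B a) \<le> L"
  shows "card (Sigma A B) \<le> K * L"
proof -
  have "card (Sigma A B) = (\<Sum>a\<in>A. card (B a))" using assms by simp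
  also have "\<dots> \<le> card A * L" using assms(3) sum_bounded_above[of A "\<lambda>a. card (B a)" L] by simp
  also have "\<dots> \<le> K * L" using assms(2) by simp
  finally show ?thesis .
qed

lemma finite_successors: "finite R \<Longrightarrow> finite {s. (t, s) \<in> R}"
  by (rule finite_subset[of _ "Range R"]) (auto simp: finite_Range)

lemma finite_predecessors: "finite R \<Longrightarrow> finite {t. (t, s) \<in> R}"
  by (rule finite_subset[of _ "Domain R"]) (auto simp: finite_Domain)

lemma card_composable_triples_fst:
  assumes "finite R" and row_le: "\<And>t. card {s. (t, s) \<in> R} \<le> K"
  shows "card {x \<in> composable_triples R. fst x = t} \<le> K * K"
proof -
  have "{x \<in> composable_triples R. fst x = t}
      = (\<lambda>(s, r). (t, s, r)) ` (SIGMA s:{s. (t, s) \<in> R}. {r. (s, r) \<in> R})"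
    by (auto simp: composable_triples_def)
  also have "card \<dots> \<le> K * K"
    by (rule le_trans[OF card_image_le card_Sigma_le_mult])
      (use assms finite_successors[OF \<open>finite R\<close>] in auto)
  finally show ?thesis .
qed

lemma card_composable_triples_snd:
  assumes "finite R" and row_le: "\<And>t. card {s. (t, s) \<in> R} \<le> K"
    and col_le: "\<And>s. card {t. (t, s) \<in> R} \<le> K"
  shows "card {x \<in> composable_triples R. fst (snd x) = s} \<le> K * K"
proof -
  have "{x \<in> composable_triples R. fst (snd x) = s}
      = (\<lambda>(t, r). (t, s, r)) ` ({t. (t, s) \<in> R} \<times> {r. (s, r) \<in> R})"
    by (auto simp: composable_triples_def)
  also have "card \<dots> \<le> K * K"
    by (rule le_trans[OF card_image_le card_Sigma_le_mult])
      (use assms finite_successors[OF \<open>finite R\<close>] finite_predecessors[OF \<open>finite R\<close>] in auto)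
  finally show ?thesis .
qed

lemma card_composable_triples_thd:
  assumes "finite R" and col_le: "\<And>s. card {t. (t, s) \<in> R} \<le> K"
  shows "card {x \<in> composable_triples R. snd (snd x) = r} \<le> K * K"
proof -
  have "{x \<in> composable_triples R. snd (snd x) = r}
      = (\<lambda>(s, t). (t, s, r)) ` (SIGMA s:{s. (s, r) \<in> R}. {t. (t, s) \<in> R})"
    by (auto simp: composable_triples_def)
  also have "card \<dots> \<le> K * K"
    by (rule le_trans[OF card_image_le card_Sigma_le_mult])
      (use assms finite_predecessors[OF \<open>finite R\<close>] in auto)
  finally show ?thesis .
qed

locale binary_cluster_tree =
  fixes I :: "'i set" and rt :: 'c and sons :: "'c \<Rightarrow> 'c set" and label :: "'c \<Rightarrow> 'i set"
  assumes binary_cluster_tree: "is_binary_cluster_tree I rt sons label"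
begin

abbreviation "C \<equiv> clusters rt sons"

lemma finite_clusters: "finite C"
  using binary_cluster_tree unfolding is_binary_cluster_tree_def by blast

lemma sonsp_subset_clusters: "t \<in> C \<Longrightarrow> sonsp sons t \<subseteq> C"
  unfolding sonsp_def by (auto intro: clusters.son)

lemma finite_sonsp: "t \<in> C \<Longrightarrow> finite (sonsp sons t)"
  using sonsp_subset_clusters finite_clusters finite_subset by blast

lemma label_subset: "t \<in> C \<Longrightarrow> label t \<subseteq> I"
proof (induction rule: clusters.induct)
  case rootI
  then show ?case using binary_cluster_tree unfolding is_binary_cluster_tree_def by simp
next
  case (son t t')
  then obtain a b where "sons t = {a, b}" "label a \<union> label b = label t"
    using binary_cluster_tree unfolding is_binary_cluster_tree_def by blast
  then show ?case using son by auto
qed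

lemma sum_card_label_sonsp: "t \<in> C \<Longrightarrow> (\<Sum>u\<in>sonsp sons t. card (label u)) = card (label t)"
proof (cases "sons t = {}")
  case True
  then show ?thesis by (simp add: sonsp_def)
next
  case False
  assume t: "t \<in> C"
  then obtain a b where ab: "a \<noteq> b" "sons t = {a, b}" "label a \<inter> label b = {}"
      "label a \<union> label b = label t"
    using binary_cluster_tree False unfolding is_binary_cluster_tree_def by blast
  have "finite (label t)"
    using label_subset[OF t] binary_cluster_tree finite_subset
    unfolding is_binary_cluster_tree_def by blast
  then have "finite (label a)" "finite (label b)" using ab(4) by (metis finite_Un)+
  then show ?thesis using False ab by (simp add: sonsp_def card_Un_disjoint[symmetric])
qed

lemma generation_subset_clusters: "t \<in> C \<Longrightarrow> generation (sonsp sons) t j \<subseteq> C"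
  by (induction j) (use sonsp_subset_clusters in auto)

lemma finite_generation_sonsp: "t \<in> C \<Longrightarrow> finite (generation (sonsp sons) t j)"
  using generation_subset_clusters finite_clusters finite_subset by blast

lemma sum_card_label_generation_le:
  assumes "t \<in> C"
  shows "(\<Sum>u\<in>generation (sonsp sons) t j. card (label u)) \<le> card (label t)"
proof (induction j)
  case 0
  then show ?case by simp
next
  case (Suc j)
  let ?G = "generation (sonsp sons) t j"
  have G: "finite ?G" "?G \<subseteq> C"
    using assms finite_generation_sonsp generation_subset_clusters by auto
  have "(\<Sum>u\<in>generation (sonsp sons) t (Suc j). card (label u))
      \<le> (\<Sum>a\<in>?G. \<Sum>u\<in>sonsp sons a. card (label u))"
    using G finite_sonsp by (simp add: subset_iff sum_UN_le)
  also have "\<dots> = (\<Sum>a\<in>?G. card (label a))"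
    using G sum_card_label_sonsp by (intro sum.cong) auto
  finally show ?case using Suc by simp
qed

lemma cluster_level_in_clusters: "cluster_level rt sons t n \<Longrightarrow> t \<in> C"
  by (induction rule: cluster_level.induct) (auto intro: clusters.intros)

lemma root_not_son: "t \<in> C \<Longrightarrow> rt \<notin> sons t"
  using binary_cluster_tree unfolding is_binary_cluster_tree_def by blast

lemma sons_disjoint: "t1 \<in> C \<Longrightarrow> t2 \<in> C \<Longrightarrow> t1 \<noteq> t2 \<Longrightarrow> sons t1 \<inter> sons t2 = {}"
  using binary_cluster_tree unfolding is_binary_cluster_tree_def by blast

lemma cluster_level_unique:
  "cluster_level rt sons t n \<Longrightarrow> cluster_level rt sons t m \<Longrightarrow> n = m"
proof (induction arbitrary: m rule: cluster_level.induct)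
  case rootI
  then show ?case by cases (use root_not_son cluster_level_in_clusters in blast)+
next
  case (son t n t')
  from son.prems show ?case
  proof cases
    case rootI
    then show ?thesis using son.hyps root_not_son cluster_level_in_clusters by blast
  next
    case (son t2 n2)
    then have "t = t2"
      using sons_disjoint \<open>t' \<in> sons t\<close> cluster_level_in_clusters \<open>cluster_level rt sons t n\<close>
      by blast
    then show ?thesis using son.IH \<open>cluster_level rt sons t2 n2\<close> \<open>m = Suc n2\<close> by simp
  qed
qed

lemma cluster_level_le_depth: "cluster_level rt sons t n \<Longrightarrow> n \<le> cluster_depth rt sons"
proof -
  assume level: "cluster_level rt sons t n"
  have "{n. \<exists>t. cluster_level rt sons t n} \<subseteq> (\<lambda>t. THE n. cluster_level rt sons t n) ` C"
  proof
    fix n assume "n \<in> {n. \<exists>t. cluster_level rt sons t n}"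
    then obtain t where t: "cluster_level rt sons t n" by blast
    then have "(THE n. cluster_level rt sons t n) = n" using cluster_level_unique by blast
    then show "n \<in> (\<lambda>t. THE n. cluster_level rt sons t n) ` C"
      using cluster_level_in_clusters[OF t] by force
  qed
  then have "finite {n. \<exists>t. cluster_level rt sons t n}"
    using finite_clusters finite_subset by blast
  then show ?thesis unfolding cluster_depth_def using level by (intro Max_ge) auto
qed

lemma root_generation_level:
  "u \<in> generation (sonsp sons) rt n \<Longrightarrow>
    \<exists>m. cluster_level rt sons u m \<and> (m = n \<or> sons u = {} \<and> m < n)"
proof (induction n arbitrary: u)
  case 0
  then show ?case by (auto intro: cluster_level.rootI)
next
  case (Suc n)
  then obtain v where v: "v \<in> generation (sonsp sons) rt n" "u \<in> sonsp sons v" by auto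
  obtain m where m: "cluster_level rt sons v m" "m = n \<or> sons v = {} \<and> m < n"
    using Suc.IH[OF v(1)] by blast
  show ?case
  proof (cases "sons v = {}")
    case True
    then show ?thesis using v(2) m by (auto simp: sonsp_def)
  next
    case False
    then show ?thesis using v(2) m by (auto simp: sonsp_def intro: cluster_level.son)
  qed
qed

lemma root_generation_nonleaf_level:
  "u \<in> generation (sonsp sons) rt n \<Longrightarrow> sons u \<noteq> {} \<Longrightarrow> cluster_level rt sons u n"
  using root_generation_level by blast

lemma root_generation_nonleaf_depth:
  assumes "u \<in> generation (sonsp sons) rt n" and "sons u \<noteq> {}"
  shows "Suc n \<le> cluster_depth rt sons"
proof -
  obtain v where "v \<in> sons u" using assms(2) by blast
  moreover have "cluster_level rt sons u n" using assms by (rule root_generation_nonleaf_level)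
  ultimately have "cluster_level rt sons v (Suc n)" by (simp add: cluster_level.son)
  then show ?thesis by (rule cluster_level_le_depth)
qed

lemma root_generation_sonsp_disjoint:
  assumes u1: "u1 \<in> generation (sonsp sons) rt n" and u2: "u2 \<in> generation (sonsp sons) rt n"
    and "u1 \<noteq> u2"
  shows "sonsp sons u1 \<inter> sonsp sons u2 = {}"
proof -
  \<comment> \<open>A leaf copied down into generation n sits on a level below n, while the sons of a
    non-leaf of generation n sit on level n + 1.\<close>
  have leaf_not_son: "a \<notin> sons b"
    if a: "a \<in> generation (sonsp sons) rt n" and b: "b \<in> generation (sonsp sons) rt n"
      and "sons a = {}" for a b
  proof
    assume ab: "a \<in> sons b"
    then have "cluster_level rt sons b n" using b root_generation_nonleaf_level by blast
    then have "cluster_level rt sons a (Suc n)" using ab by (rule cluster_level.son)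
    moreover obtain m where "cluster_level rt sons a m" "m \<le> n"
      using root_generation_level[OF a] by auto
    ultimately show False using cluster_level_unique by fastforce
  qed
  have "u1 \<in> C" "u2 \<in> C" using u1 u2 generation_subset_clusters[OF clusters.rootI] by blast+
  then have "sons u1 \<inter> sons u2 = {}" using \<open>u1 \<noteq> u2\<close> by (rule sons_disjoint)
  then show ?thesis
    using \<open>u1 \<noteq> u2\<close> leaf_not_son[OF u1 u2] leaf_not_son[OF u2 u1]
    by (simp add: sonsp_def)
qed

end

definition triple_sons ::
  "('c \<Rightarrow> 'c set) \<Rightarrow> ('c \<times> 'c \<Rightarrow> bool) \<Rightarrow> 'c \<times> 'c \<times> 'c \<Rightarrow> ('c \<times> 'c \<times> 'c) set" where
  "triple_sons sons bleaf = (\<lambda>(t, s, r).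
     if \<not> bleaf (t, s) \<and> \<not> bleaf (s, r) then sonsp sons t \<times> sonsp sons s \<times> sonsp sons r else {})"

lemma triple_sons_subset:
  "triple_sons sons bleaf (t, s, r) \<subseteq> sonsp sons t \<times> sonsp sons s \<times> sonsp sons r"
  by (simp add: triple_sons_def)

lemma generation_triple_sons_subset:
  "generation (triple_sons sons bleaf) (t, s, r) j
    \<subseteq> generation (sonsp sons) t j \<times> generation (sonsp sons) s j \<times> generation (sonsp sons) r j"
proof (induction j)
  case 0
  then show ?case by simp
next
  case (Suc j)
  show ?case
  proof
    fix x assume "x \<in> generation (triple_sons sons bleaf) (t, s, r) (Suc j)"
    then obtain t' s' r' where parent: "(t', s', r') \<in> generation (triple_sons sons bleaf) (t, s, r) j"
      and "x \<in> triple_sons sons bleaf (t', s', r')" by auto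
    then have "x \<in> sonsp sons t' \<times> sonsp sons s' \<times> sonsp sons r'"
      using triple_sons_subset[of sons bleaf t' s' r'] by blast
    with parent Suc.IH show "x \<in> generation (sonsp sons) t (Suc j) \<times> generation (sonsp sons) s (Suc j)
        \<times> generation (sonsp sons) r (Suc j)" by auto
  qed
qed

locale block_cluster_tree = binary_cluster_tree +
  fixes bleaf
  assumes block_tree: "is_block_tree rt sons bleaf"
begin

abbreviation "B \<equiv> blocks rt sons bleaf"
abbreviation "T \<equiv> triples rt sons bleaf"
abbreviation "G \<equiv> generation (triple_sons sons bleaf)"

lemma blocks_subset_clusters: "B \<subseteq> C \<times> C"
proof -
  have "t \<in> C \<and> s \<in> C" if "(t, s) \<in> B" for t s
    using that by (induction rule: blocks.induct) (auto simp: clusters.rootI dest: sonsp_subset_clusters)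
  then show ?thesis by auto
qed

lemma finite_blocks: "finite B"
  using blocks_subset_clusters finite_clusters finite_subset by blast

lemma triples_subset_composable: "T \<subseteq> composable_triples B"
proof -
  have "(t, s) \<in> B \<and> (s, r) \<in> B" if "(t, s, r) \<in> T" for t s r
    using that by (induction rule: triples.induct) (auto intro: blocks.rootI blocks.son)
  then show ?thesis by (auto simp: composable_triples_def)
qed

lemma triple_in_root_generation: "(t, s, r) \<in> T \<Longrightarrow> \<exists>n. (t, s, r) \<in> G (rt, rt, rt) n"
proof (induction rule: triples.induct)
  case rootI
  have "(rt, rt, rt) \<in> G (rt, rt, rt) 0" by simp
  then show ?case by blast
next
  case (son t s r t' s' r')
  then obtain n where "(t, s, r) \<in> G (rt, rt, rt) n" by blast
  moreover have "(t', s', r') \<in> triple_sons sons bleaf (t, s, r)"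
    using son by (simp add: triple_sons_def)
  ultimately have "(t', s', r') \<in> G (rt, rt, rt) (Suc n)" by auto
  then show ?case by blast
qed

lemma root_generation_subset_triples: "G (rt, rt, rt) n \<subseteq> T"
proof (induction n)
  case 0
  then show ?case by (simp add: triples.rootI)
next
  case (Suc n)
  show ?case
  proof
    fix x assume "x \<in> G (rt, rt, rt) (Suc n)"
    then obtain t s r where "(t, s, r) \<in> T" "x \<in> triple_sons sons bleaf (t, s, r)"
      using Suc.IH by auto
    then show "x \<in> T" by (auto simp: triple_sons_def split: if_splits intro: triples.son)
  qed
qed

lemma generation_subset_triples:
  assumes "(t, s, r) \<in> T"
  shows "G (t, s, r) j \<subseteq> T"
proof -
  obtain n where "(t, s, r) \<in> G (rt, rt, rt) n" using assms triple_in_root_generation by blast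
  then have "G (t, s, r) j \<subseteq> G (rt, rt, rt) (n + j)" using generation_trans by fast
  then show ?thesis using root_generation_subset_triples by blast
qed

lemma finite_triples: "finite T"
proof -
  have "T \<subseteq> C \<times> C \<times> C"
    using triples_subset_composable blocks_subset_clusters by (auto simp: composable_triples_def)
  then show ?thesis using finite_clusters finite_subset by blast
qed

lemma root_generation_triple_sons_disjoint:
  assumes x: "x \<in> G (rt, rt, rt) n" and y: "y \<in> G (rt, rt, rt) n" and "x \<noteq> y"
  shows "triple_sons sons bleaf x \<inter> triple_sons sons bleaf y = {}"
proof -
  obtain t1 s1 r1 t2 s2 r2 where xy: "x = (t1, s1, r1)" "y = (t2, s2, r2)"
    by (cases x, cases y) auto
  let ?D = "generation (sonsp sons) rt n"
  have "t1 \<in> ?D" "s1 \<in> ?D" "r1 \<in> ?D" "t2 \<in> ?D" "s2 \<in> ?D" "r2 \<in> ?D"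
    using x y xy generation_triple_sons_subset[of sons bleaf rt rt rt n] by auto
  then have "sonsp sons t1 \<inter> sonsp sons t2 = {} \<or> sonsp sons s1 \<inter> sonsp sons s2 = {}
      \<or> sonsp sons r1 \<inter> sonsp sons r2 = {}"
    using \<open>x \<noteq> y\<close> xy root_generation_sonsp_disjoint by blast
  then show ?thesis using xy triple_sons_subset[of sons bleaf] by blast
qed

lemma root_generation_triples_depth:
  assumes "x \<in> G (rt, rt, rt) (Suc n)"
  shows "Suc n \<le> cluster_depth rt sons"
proof -
  obtain t s r where tsr: "(t, s, r) \<in> G (rt, rt, rt) n" "x \<in> triple_sons sons bleaf (t, s, r)"
    using assms by auto
  then have nonleaf: "\<not> bleaf (t, s)" by (auto simp: triple_sons_def split: if_splits)
  have "(t, s) \<in> B"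
    using tsr(1) root_generation_subset_triples triples_subset_composable
    by (force simp: composable_triples_def)
  then have "sons t \<noteq> {} \<or> sons s \<noteq> {}"
    using block_tree nonleaf unfolding is_block_tree_def by blast
  moreover have "t \<in> generation (sonsp sons) rt n" "s \<in> generation (sonsp sons) rt n"
    using tsr(1) generation_triple_sons_subset[of sons bleaf rt rt rt n] by auto
  ultimately show ?thesis using root_generation_nonleaf_depth by blast
qed

lemma generation_triples_extinct:
  assumes "(t, s, r) \<in> T"
  shows "G (t, s, r) (Suc (cluster_depth rt sons)) = {}"
proof -
  obtain n where n: "(t, s, r) \<in> G (rt, rt, rt) n" using assms triple_in_root_generation by blast
  have "x \<notin> G (t, s, r) (Suc (cluster_depth rt sons))" for x
    using generation_trans[OF n] root_generation_triples_depth[of x "n + cluster_depth rt sons"]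
    by fastforce
  then show ?thesis by blast
qed

lemma generation_triple_sons_disjoint:
  assumes "(t, s, r) \<in> T" "x \<in> G (t, s, r) j" "y \<in> G (t, s, r) j" "x \<noteq> y"
  shows "triple_sons sons bleaf x \<inter> triple_sons sons bleaf y = {}"
proof -
  obtain n where "(t, s, r) \<in> G (rt, rt, rt) n" using assms(1) triple_in_root_generation by blast
  then have "x \<in> G (rt, rt, rt) (n + j)" "y \<in> G (rt, rt, rt) (n + j)"
    using assms(2,3) generation_trans by fast+
  then show ?thesis using assms(4) by (rule root_generation_triple_sons_disjoint)
qed

lemma finite_triple_sons: "x \<in> T \<Longrightarrow> finite (triple_sons sons bleaf x)"
proof -
  assume "x \<in> T"
  moreover obtain t s r where x: "x = (t, s, r)" by (cases x)
  ultimately have "t \<in> C" "s \<in> C" "r \<in> C"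
    using triples_subset_composable blocks_subset_clusters by (auto simp: composable_triples_def)
  then show ?thesis
    unfolding x by (intro finite_subset[OF triple_sons_subset] finite_SigmaI finite_sonsp)
qed

lemma cost_le_triple_sons:
  fixes W :: "_ \<Rightarrow> _ \<Rightarrow> _ \<Rightarrow> nat" and Cmb :: real and k :: nat
  assumes W_leaf: "\<And>t s r. (t, s) \<in> B \<Longrightarrow> (s, r) \<in> B \<Longrightarrow> bleaf (t, s) \<or> bleaf (s, r) \<Longrightarrow>
        real (W t s r) \<le> Cmb * real k ^ 2 * real (card (label t) + card (label s) + card (label r))"
    and W_rec: "\<And>t s r. (t, s) \<in> B \<Longrightarrow> (s, r) \<in> B \<Longrightarrow> \<not> bleaf (t, s) \<Longrightarrow> \<not> bleaf (s, r) \<Longrightarrow>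
        real (W t s r) \<le> Cmb * real k ^ 2 * real (card (label t) + card (label s) + card (label r))
          + (\<Sum>t'\<in>sonsp sons t. \<Sum>s'\<in>sonsp sons s. \<Sum>r'\<in>sonsp sons r. real (W t' s' r'))"
    and "(t, s, r) \<in> T"
  shows "real (W t s r) \<le> Cmb * real k ^ 2 * real (card (label t) + card (label s) + card (label r))
      + (\<Sum>(t', s', r')\<in>triple_sons sons bleaf (t, s, r). real (W t' s' r'))"
proof -
  have blocks: "(t, s) \<in> B" "(s, r) \<in> B"
    using assms(3) triples_subset_composable by (auto simp: composable_triples_def)
  show ?thesis
  proof (cases "bleaf (t, s) \<or> bleaf (s, r)")
    case True
    then show ?thesis using W_leaf[OF blocks] by (auto simp: triple_sons_def)
  next
    case False
    then show ?thesis
      using W_rec[OF blocks] by (simp add: triple_sons_def sum.cartesian_product split_def)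
  qed
qed


lemma cost_le_sum_label_generations:
  fixes W :: "_ \<Rightarrow> _ \<Rightarrow> _ \<Rightarrow> nat" and Cmb :: real and k :: nat
  assumes W_leaf: "\<And>t s r. (t, s) \<in> B \<Longrightarrow> (s, r) \<in> B \<Longrightarrow> bleaf (t, s) \<or> bleaf (s, r) \<Longrightarrow>
        real (W t s r) \<le> Cmb * real k ^ 2 * real (card (label t) + card (label s) + card (label r))"
    and W_rec: "\<And>t s r. (t, s) \<in> B \<Longrightarrow> (s, r) \<in> B \<Longrightarrow> \<not> bleaf (t, s) \<Longrightarrow> \<not> bleaf (s, r) \<Longrightarrow>
        real (W t s r) \<le> Cmb * real k ^ 2 * real (card (label t) + card (label s) + card (label r))
          + (\<Sum>t'\<in>sonsp sons t. \<Sum>s'\<in>sonsp sons s. \<Sum>r'\<in>sonsp sons r. real (W t' s' r'))"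
    and x0: "(t0, s0, r0) \<in> T"
  shows "real (W t0 s0 r0) \<le> Cmb * real k ^ 2 * (\<Sum>j\<le>cluster_depth rt sons.
      real (\<Sum>(t, s, r)\<in>G (t0, s0, r0) j. card (label t) + card (label s) + card (label r)))"
proof -
  define cost where "cost = (\<lambda>(t, s, r).
    Cmb * real k ^ 2 * real (card (label t) + card (label s) + card (label r)))"
  have "(\<lambda>(t, s, r). real (W t s r)) (t0, s0, r0)
      \<le> (\<Sum>j\<le>cluster_depth rt sons. \<Sum>x\<in>G (t0, s0, r0) j. cost x)"
  proof (rule le_sum_generations)
    show "finite (G (t0, s0, r0) j)" for j
      using generation_subset_triples[OF x0] finite_triples by (rule finite_subset)
    show "finite (triple_sons sons bleaf x)" if "x \<in> G (t0, s0, r0) j" for j x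
      using that generation_subset_triples[OF x0] finite_triple_sons by blast
    show "triple_sons sons bleaf x \<inter> triple_sons sons bleaf y = {}"
      if "x \<in> G (t0, s0, r0) j" "y \<in> G (t0, s0, r0) j" "x \<noteq> y" for j x y
      using x0 that by (rule generation_triple_sons_disjoint)
    show "G (t0, s0, r0) (Suc (cluster_depth rt sons)) = {}"
      using x0 by (rule generation_triples_extinct)
    fix j x assume "x \<in> G (t0, s0, r0) j"
    then have "x \<in> T" using generation_subset_triples[OF x0] by blast
    moreover obtain t s r where "x = (t, s, r)" by (cases x)
    ultimately show "(\<lambda>(t, s, r). real (W t s r)) x
        \<le> cost x + (\<Sum>y\<in>triple_sons sons bleaf x. (\<lambda>(t, s, r). real (W t s r)) y)"
      using cost_le_triple_sons[OF W_leaf W_rec] unfolding cost_def by simp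
  qed
  then show ?thesis by (simp add: cost_def sum_distrib_left split_def)
qed

end

locale sparse_block_cluster_tree = block_cluster_tree +
  fixes Csp :: nat
  assumes sparse_rows: "\<And>t. t \<in> C \<Longrightarrow> card {s. (t, s) \<in> B} \<le> Csp"
    and sparse_cols: "\<And>t. t \<in> C \<Longrightarrow> card {s. (s, t) \<in> B} \<le> Csp"
begin

lemma row_le: "card {s. (t, s) \<in> B} \<le> Csp"
proof (cases "t \<in> C")
  case False
  then have "{s. (t, s) \<in> B} = {}" using blocks_subset_clusters by auto
  then show ?thesis by simp
qed (rule sparse_rows)

lemma col_le: "card {s. (s, t) \<in> B} \<le> Csp"
proof (cases "t \<in> C")
  case False
  then have "{s. (s, t) \<in> B} = {}" using blocks_subset_clusters by auto
  then show ?thesis by simp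
qed (rule sparse_cols)

lemma sum_card_label_triple_generation_le:
  assumes "(t0, s0, r0) \<in> T"
  shows "(\<Sum>(t, s, r)\<in>G (t0, s0, r0) j. card (label t) + card (label s) + card (label r))
     \<le> Csp\<^sup>2 * (card (label t0) + card (label s0) + card (label r0))"
proof -
  let ?S = "G (t0, s0, r0) j"
  have "?S \<subseteq> T" using assms by (rule generation_subset_triples)
  then have S: "finite ?S" "?S \<subseteq> composable_triples B"
    using finite_triples triples_subset_composable finite_subset by blast+
  have roots: "t0 \<in> C" "s0 \<in> C" "r0 \<in> C"
    using assms triples_subset_composable blocks_subset_clusters
    by (auto simp: composable_triples_def)
  have component_le: "(\<Sum>x\<in>?S. card (label (h x))) \<le> Csp * Csp * card (label u0)"
    if "u0 \<in> C" "h ` ?S \<subseteq> generation (sonsp sons) u0 j"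
      and fibers_le: "\<And>u. card {x \<in> composable_triples B. h x = u} \<le> Csp * Csp"
    for h u0
  proof -
    have "card {x \<in> ?S. h x = u} \<le> Csp * Csp" for u
    proof -
      have "{x \<in> ?S. h x = u} \<subseteq> {x \<in> composable_triples B. h x = u}" using S by blast
      moreover have "finite {x \<in> composable_triples B. h x = u}"
        using finite_composable_triples[OF finite_blocks] by simp
      ultimately show ?thesis using fibers_le card_mono le_trans by blast
    qed
    then have "(\<Sum>x\<in>?S. card (label (h x)))
        \<le> Csp * Csp * (\<Sum>u\<in>generation (sonsp sons) u0 j. card (label u))"
      using S that finite_generation_sonsp by (intro sum_comp_le_by_card_fibers)
    also have "\<dots> \<le> Csp * Csp * card (label u0)"
      using \<open>u0 \<in> C\<close> sum_card_label_generation_le by simp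
    finally show ?thesis .
  qed
  have generations: "fst ` ?S \<subseteq> generation (sonsp sons) t0 j"
      "(\<lambda>x. fst (snd x)) ` ?S \<subseteq> generation (sonsp sons) s0 j"
      "(\<lambda>x. snd (snd x)) ` ?S \<subseteq> generation (sonsp sons) r0 j"
    using generation_triple_sons_subset[of sons bleaf t0 s0 r0 j] by auto
  have "(\<Sum>(t, s, r)\<in>?S. card (label t) + card (label s) + card (label r))
      = (\<Sum>x\<in>?S. card (label (fst x))) + (\<Sum>x\<in>?S. card (label (fst (snd x))))
        + (\<Sum>x\<in>?S. card (label (snd (snd x))))"
    by (simp add: split_def sum.distrib)
  also have "\<dots> \<le> Csp * Csp * card (label t0) + Csp * Csp * card (label s0)
      + Csp * Csp * card (label r0)"
    using roots generations
    by (intro add_mono component_le card_composable_triples_fst card_composable_triples_snd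
        card_composable_triples_thd finite_blocks row_le col_le)
  finally show ?thesis by (simp add: power2_eq_square algebra_simps)
qed

end

theorem mainTheorem2:
  fixes I :: "'i set" and rt :: 'c and sons :: "'c \<Rightarrow> 'c set" and label :: "'c \<Rightarrow> 'i set"
    and bleaf :: "'c \<times> 'c \<Rightarrow> bool" and Csp :: nat and Cmb :: real and k :: nat
    and W :: "'c \<Rightarrow> 'c \<Rightarrow> 'c \<Rightarrow> nat"
  assumes ct: "is_binary_cluster_tree I rt sons label"
    and bt: "is_block_tree rt sons bleaf"
    and sp_row: "\<And>t. t \<in> clusters rt sons \<Longrightarrow> card {s. (t, s) \<in> blocks rt sons bleaf} \<le> Csp"
    and sp_col: "\<And>t. t \<in> clusters rt sons \<Longrightarrow> card {s. (s, t) \<in> blocks rt sons bleaf} \<le> Csp"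
    and Cmb_nonneg: "0 \<le> Cmb"
    and W_leaf: "\<And>t s r. (t, s) \<in> blocks rt sons bleaf \<Longrightarrow> (s, r) \<in> blocks rt sons bleaf \<Longrightarrow>
        bleaf (t, s) \<or> bleaf (s, r) \<Longrightarrow>
        real (W t s r) \<le> Cmb * real k ^ 2 * real (card (label t) + card (label s) + card (label r))"
    and W_rec: "\<And>t s r. (t, s) \<in> blocks rt sons bleaf \<Longrightarrow> (s, r) \<in> blocks rt sons bleaf \<Longrightarrow>
        \<not> bleaf (t, s) \<Longrightarrow> \<not> bleaf (s, r) \<Longrightarrow>
        real (W t s r) \<le> Cmb * real k ^ 2 * real (card (label t) + card (label s) + card (label r))
          + (\<Sum>t'\<in>sonsp sons t. \<Sum>s'\<in>sonsp sons s. \<Sum>r'\<in>sonsp sons r. real (W t' s' r'))"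
  shows "\<forall>(t0, s0, r0) \<in> triples rt sons bleaf.
    real (W t0 s0 r0) \<le> (real Csp ^ 2 * Cmb) * real k ^ 2 * real (cluster_depth rt sons + 1)
       * real (card (label t0) + card (label s0) + card (label r0))"
proof clarify
  interpret sparse_block_cluster_tree I rt sons label bleaf Csp
    by unfold_locales (fact ct bt sp_row sp_col)+
  fix t0 s0 r0 assume x0: "(t0, s0, r0) \<in> T"
  let ?N = "card (label t0) + card (label s0) + card (label r0)"
  have "real (W t0 s0 r0) \<le> Cmb * real k ^ 2 * (\<Sum>j\<le>cluster_depth rt sons.
      real (\<Sum>(t, s, r)\<in>G (t0, s0, r0) j. card (label t) + card (label s) + card (label r)))"
    using W_leaf W_rec x0 by (rule cost_le_sum_label_generations)
  also have "\<dots> \<le> Cmb * real k ^ 2 * (\<Sum>j\<le>cluster_depth rt sons. real (Csp\<^sup>2 * ?N))"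
    using Cmb_nonneg sum_card_label_triple_generation_le[OF x0]
    by (intro mult_left_mono sum_mono) (simp_all only: of_nat_le_iff, simp)
  finally show "real (W t0 s0 r0) \<le> (real Csp ^ 2 * Cmb) * real k ^ 2
      * real (cluster_depth rt sons + 1) * real ?N"
    by (simp add: algebra_simps)
qed

end
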